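(* Let $\mathcal{L}=(\mathrm{Fm},\vdash)$ be a selfextensional logic for which properties $\neg_S$ and $\neg_A$ hold, and let $N\subseteq\mathrm{Fm}\times\mathrm{Fm}$ be a normative system closed under (WO). Then $$P_N=\{(\alpha,\varphi)\mid(\alpha,\neg\varphi)\notin N\}.$$
   Context: A logic is $\mathcal{L}=(\mathrm{Fm},\vdash)$ with $\mathrm{Fm}$ a formula algebra over propositional variables and $\vdash\subseteq\mathcal{P}(\mathrm{Fm})\times\mathrm{Fm}$ a consequence relation (reflexive, monotone, cut). $Cn(\Gamma)=\{\psi\mid\Gamma\vdash\psi\}$, $Cn(\varphi,\psi)=Cn(\{\varphi,\psi\})$, $\varphi\vdash\psi$ means $\{\varphi\}\vdash\psi$. $\mathcal{L}$ is selfextensional if whenever $\varphi\vdash\psi$ and $\psi\vdash\varphi$, then $\delta(\varphi/p)$ and $\delta(\psi/p)$ are interderivable for every formula $\delta$ and variable $p$. Property $\neg_W$: there is a unary term $\neg$ such that $\psi\in Cn(\varphi)$ implies $\neg\varphi\in Cn(\neg\psi)$; for such $\neg$: $\neg_A$: $Cn(\varphi,\neg\varphi)=\mathrm{Fm}$ for all $\varphi$; $\neg_S$: $Cn(\varphi,\psi)=\mathrm{Fm}$ implies $\neg\psi\in Cn(\varphi)$. A normative system is any $N\subseteq\mathrm{Fm}\times\mathrm{Fm}$; it is closed under (WO) if $(\alpha,\varphi)\in N$ and $\varphi\vdash\psi$ imply $(\alpha,\psi)\in N$. The negative permission system is $P_N=\{(\alpha,\varphi)\mid\forall\psi((\alpha,\psi)\in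 N\Rightarrow Cn(\varphi,\psi)\neq\mathrm{Fm})\}$. *)

theory Defs
  imports Main
begin

datatype ('v, 'c) fm = Var 'v | App 'c "('v, 'c) fm list"

fun subst :: "('v, 'c) fm \<Rightarrow> 'v \<Rightarrow> ('v, 'c) fm \<Rightarrow> ('v, 'c) fm" where
  "subst (Var q) p \<phi> = (if q = p then \<phi> else Var q)"
| "subst (App c ds) p \<phi> = App c (map (\<lambda>d. subst d p \<phi>) ds)"

definition consequence_relation :: "(('v,'c) fm set \<Rightarrow> ('v,'c) fm \<Rightarrow> bool) \<Rightarrow> bool" where
  "consequence_relation vd \<longleftrightarrow>
     (\<forall>\<Gamma> \<phi>. \<phi> \<in> \<Gamma> \<longrightarrow> vd \<Gamma> \<phi>) \<and>
     (\<forall>\<Gamma> \<Delta> \<phi>. vd \<Gamma> \<phi> \<and> \<Gamma> \<subseteq> \<Delta> \<longrightarrow> vd \<Delta> \<phi>) \<and>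
     (\<forall>\<Gamma> \<Delta> \<phi>. (\<forall>\<psi>\<in>\<Delta>. vd \<Gamma> \<psi>) \<and> vd (\<Gamma> \<union> \<Delta>) \<phi> \<longrightarrow> vd \<Gamma> \<phi>)"

definition Cn :: "(('v,'c) fm set \<Rightarrow> ('v,'c) fm \<Rightarrow> bool) \<Rightarrow> ('v,'c) fm set \<Rightarrow> ('v,'c) fm set" where
  "Cn vd \<Gamma> = {\<psi>. vd \<Gamma> \<psi>}"

definition selfextensional :: "(('v,'c) fm set \<Rightarrow> ('v,'c) fm \<Rightarrow> bool) \<Rightarrow> bool" where
  "selfextensional vd \<longleftrightarrow>
     (\<forall>\<phi> \<psi>. vd {\<phi>} \<psi> \<and> vd {\<psi>} \<phi> \<longrightarrow>
        (\<forall>\<delta> p. vd {subst \<delta> p \<phi>} (subst \<delta> p \<psi>) \<and> vd {subst \<delta> p \<psi>} (subst \<delta> p \<phi>)))"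

text \<open>A unary term: a formula t in (at most) the variable p; neg phi = t(phi/p).\<close>
definition unary_term :: "('v,'c) fm \<Rightarrow> 'v \<Rightarrow> bool" where
  "unary_term t p \<longleftrightarrow> (\<forall>q. q \<noteq> p \<longrightarrow> (\<forall>\<phi>. subst t q \<phi> = t))"

definition neg_W :: "(('v,'c) fm set \<Rightarrow> ('v,'c) fm \<Rightarrow> bool) \<Rightarrow> (('v,'c) fm \<Rightarrow> ('v,'c) fm) \<Rightarrow> bool" where
  "neg_W vd neg \<longleftrightarrow> (\<forall>\<phi> \<psi>. \<psi> \<in> Cn vd {\<phi>} \<longrightarrow> neg \<phi> \<in> Cn vd {neg \<psi>})"

definition neg_A :: "(('v,'c) fm set \<Rightarrow> ('v,'c) fm \<Rightarrow> bool) \<Rightarrow> (('v,'c) fm \<Rightarrow> ('v,'c) fm) \<Rightarrow> bool" where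
  "neg_A vd neg \<longleftrightarrow> (\<forall>\<phi>. Cn vd {\<phi>, neg \<phi>} = UNIV)"

definition neg_S :: "(('v,'c) fm set \<Rightarrow> ('v,'c) fm \<Rightarrow> bool) \<Rightarrow> (('v,'c) fm \<Rightarrow> ('v,'c) fm) \<Rightarrow> bool" where
  "neg_S vd neg \<longleftrightarrow> (\<forall>\<phi> \<psi>. Cn vd {\<phi>, \<psi>} = UNIV \<longrightarrow> neg \<psi> \<in> Cn vd {\<phi>})"

definition closed_WO :: "(('v,'c) fm set \<Rightarrow> ('v,'c) fm \<Rightarrow> bool) \<Rightarrow> (('v,'c) fm \<times> ('v,'c) fm) set \<Rightarrow> bool" where
  "closed_WO vd N \<longleftrightarrow> (\<forall>\<alpha> \<phi> \<psi>. (\<alpha>, \<phi>) \<in> N \<and> vd {\<phi>} \<psi> \<longrightarrow> (\<alpha>, \<psi>) \<in> N)"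

definition neg_perm :: "(('v,'c) fm set \<Rightarrow> ('v,'c) fm \<Rightarrow> bool) \<Rightarrow> (('v,'c) fm \<times> ('v,'c) fm) set \<Rightarrow> (('v,'c) fm \<times> ('v,'c) fm) set" where
  "neg_perm vd N = {(\<alpha>, \<phi>). \<forall>\<psi>. (\<alpha>, \<psi>) \<in> N \<longrightarrow> Cn vd {\<phi>, \<psi>} \<noteq> UNIV}"

end

theory Submission
  imports Defs
begin

lemma neg_perm_imp_neg_notin:
  assumes "neg_A vd neg" and "(\<alpha>, \<phi>) \<in> neg_perm vd N"
  shows "(\<alpha>, neg \<phi>) \<notin> N"
  using assms unfolding neg_A_def neg_perm_def by auto

lemma neg_notin_imp_neg_perm:
  assumes neg_S: "neg_S vd neg" and WO: "closed_WO vd N" and notin: "(\<alpha>, neg \<phi>) \<notin> N"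
  shows "(\<alpha>, \<phi>) \<in> neg_perm vd N"
  unfolding neg_perm_def
proof (clarify)
  fix \<psi> assume "(\<alpha>, \<psi>) \<in> N" and "Cn vd {\<phi>, \<psi>} = UNIV"
  then have "Cn vd {\<psi>, \<phi>} = UNIV" by (simp add: insert_commute)
  then have "vd {\<psi>} (neg \<phi>)" using neg_S unfolding neg_S_def Cn_def by blast
  with \<open>(\<alpha>, \<psi>) \<in> N\<close> have "(\<alpha>, neg \<phi>) \<in> N" using WO unfolding closed_WO_def by blast
  with notin show False by contradiction
qed

lemma neg_perm_eq_neg_notin:
  assumes "neg_A vd neg" and "neg_S vd neg" and "closed_WO vd N"
  shows "neg_perm vd N = {(\<alpha>, \<phi>). (\<alpha>, neg \<phi>) \<notin> N}"
  using assms neg_perm_imp_neg_notin neg_notin_imp_neg_perm by fast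

text \<open>Only \<open>\<not>\<^sub>A\<close>, \<open>\<not>\<^sub>S\<close> and (WO) are needed.\<close>

theorem proposition4p2:
  fixes vd :: "('v,'c) fm set \<Rightarrow> ('v,'c) fm \<Rightarrow> bool"
    and t :: "('v,'c) fm" and p :: 'v
    and N :: "(('v,'c) fm \<times> ('v,'c) fm) set"
  assumes "consequence_relation vd"
    and "selfextensional vd"
    and "unary_term t p"
    and "neg_W vd (\<lambda>\<phi>. subst t p \<phi>)"
    and "neg_S vd (\<lambda>\<phi>. subst t p \<phi>)"
    and "neg_A vd (\<lambda>\<phi>. subst t p \<phi>)"
    and "closed_WO vd N"
  shows "neg_perm vd N = {(\<alpha>, \<phi>). (\<alpha>, subst t p \<phi>) \<notin> N}"
  using neg_perm_eq_neg_notin[OF assms(6,5,7)] .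

end
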